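(* (a) There is a unique action of the symmetric group $S_n$ on $\mathcal{X}$ by $\mathbf{k}$-algebra automorphisms such that $\sigma\cdot x_{i,j}=x_{\sigma(i),\sigma(j)}$ for all $\sigma\in S_n$ and all pairs $(i,j)$ of distinct elements of $[n]$. (b) The ideal $\mathcal{J}$ is invariant under this action, so the quotient $\mathbf{k}$-algebra $\mathcal{X}/\mathcal{J}$ inherits an action of $S_n$ by $\mathbf{k}$-algebra automorphisms.
   Context: Let $\mathbf{k}$ be a commutative ring, let $\beta,\alpha\in\mathbf{k}$, and let $n$ be a positive integer; $[n]=\{1,\dots,n\}$. Let $\mathcal{X}=\mathbf{k}[x_{i,j}\mid 1\le i<j\le n]$ be the polynomial ring in the indeterminates $x_{i,j}$, and $\mathcal{J}$ the ideal generated by all $x_{i,j}x_{j,k}-x_{i,k}(x_{i,j}+x_{j,k}+\beta)-\alpha$ for $1\le i<j<k\le n$. For $(i,j)\in[n]^2$ with $i>j$, define the element $x_{i,j}\in\mathcal{X}$ by $x_{i,j}=-\beta-x_{j,i}$ (so $x_{i,j}$ is defined for all pairs of distinct $i,j\in[n]$). $S_n$ is the group of permutations of $[n]$. *)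

theory Defs
  imports "HOL-Library.Poly_Mapping" "HOL-Combinatorics.Permutations"
begin

text \<open>Multivariate polynomials over a commutative ring 'k in indeterminates indexed by pairs
  of naturals: a polynomial is a finitely supported map from monomials (finitely supported
  exponent vectors) to coefficients, with convolution product.\<close>

type_synonym 'k pX = "((nat \<times> nat) \<Rightarrow>\<^sub>0 nat) \<Rightarrow>\<^sub>0 'k"

definition Var :: "nat \<times> nat \<Rightarrow> 'k::comm_ring_1 pX" where
  "Var v = Poly_Mapping.single (Poly_Mapping.single v 1) 1"

definition Const :: "'k::comm_ring_1 \<Rightarrow> 'k pX" where
  "Const c = Poly_Mapping.single 0 c"

definition vars :: "'k::comm_ring_1 pX \<Rightarrow> (nat \<times> nat) set" where
  "vars p = (\<Union>m\<in>Poly_Mapping.keys p. Poly_Mapping.keys m)"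

definition idx :: "nat \<Rightarrow> (nat \<times> nat) set" where
  "idx n = {(i, j). 1 \<le> i \<and> i < j \<and> j \<le> n}"

definition Xring :: "nat \<Rightarrow> 'k::comm_ring_1 pX set" where
  "Xring n = {p. vars p \<subseteq> idx n}"

definition xx :: "'k::comm_ring_1 \<Rightarrow> nat \<Rightarrow> nat \<Rightarrow> 'k pX" where
  "xx \<beta> i j = (if i < j then Var (i, j) else - Const \<beta> - Var (j, i))"

definition Jgen :: "'k::comm_ring_1 \<Rightarrow> 'k \<Rightarrow> nat \<Rightarrow> nat \<Rightarrow> nat \<Rightarrow> 'k pX" where
  "Jgen \<beta> \<alpha> i j k = Var (i, j) * Var (j, k)
     - Var (i, k) * (Var (i, j) + Var (j, k) + Const \<beta>) - Const \<alpha>"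

inductive_set Jideal :: "nat \<Rightarrow> 'k::comm_ring_1 \<Rightarrow> 'k \<Rightarrow> 'k pX set"
  for n :: nat and \<beta> :: 'k and \<alpha> :: 'k where
  zero: "0 \<in> Jideal n \<beta> \<alpha>"
| step: "\<lbrakk>r \<in> Xring n; 1 \<le> i; i < j; j < k; k \<le> n; q \<in> Jideal n \<beta> \<alpha>\<rbrakk>
          \<Longrightarrow> r * Jgen \<beta> \<alpha> i j k + q \<in> Jideal n \<beta> \<alpha>"

definition alg_aut :: "nat \<Rightarrow> ('k::comm_ring_1 pX \<Rightarrow> 'k pX) \<Rightarrow> bool" where
  "alg_aut n f \<longleftrightarrow> bij_betw f (Xring n) (Xring n)
     \<and> f 1 = 1
     \<and> (\<forall>p\<in>Xring n. \<forall>q\<in>Xring n. f (p + q) = f p + f q)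
     \<and> (\<forall>p\<in>Xring n. \<forall>q\<in>Xring n. f (p * q) = f p * f q)
     \<and> (\<forall>c. \<forall>p\<in>Xring n. f (Const c * p) = Const c * f p)"

definition is_Sn_action :: "nat \<Rightarrow> 'k::comm_ring_1 \<Rightarrow> ((nat \<Rightarrow> nat) \<Rightarrow> 'k pX \<Rightarrow> 'k pX) \<Rightarrow> bool" where
  "is_Sn_action n \<beta> \<phi> \<longleftrightarrow>
     (\<forall>\<sigma>. \<sigma> permutes {1..n} \<longrightarrow> alg_aut n (\<phi> \<sigma>))
   \<and> (\<forall>p\<in>Xring n. \<phi> id p = p)
   \<and> (\<forall>\<sigma> \<tau>. \<sigma> permutes {1..n} \<longrightarrow> \<tau> permutes {1..n} \<longrightarrow>
        (\<forall>p\<in>Xring n. \<phi> (\<sigma> \<circ> \<tau>) p = \<phi> \<sigma> (\<phi> \<tau> p)))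
   \<and> (\<forall>\<sigma>. \<sigma> permutes {1..n} \<longrightarrow>
        (\<forall>i\<in>{1..n}. \<forall>j\<in>{1..n}. i \<noteq> j \<longrightarrow> \<phi> \<sigma> (xx \<beta> i j) = xx \<beta> (\<sigma> i) (\<sigma> j)))"

end

theory Submission
  imports Defs
begin

text \<open>Substituting polynomials for the variables is a ring homomorphism, and every
  \<open>k\<close>-algebra endomorphism of the polynomial ring is the substitution of its values on the
  variables. Hence the prescription \<open>\<sigma>(x i j) = x (\<sigma> i) (\<sigma> j)\<close> admits at most one
  action, and the substitution \<open>x i j \<mapsto> x (\<sigma> i) (\<sigma> j)\<close> is one, since substituting
  twice is substituting the composite. For the ideal, the relation
  \<open>R a b c = x a b * x b c - x a c * (x a b + x b c + \<beta>) - \<alpha>\<close> makes sense for all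
  distinct \<open>a, b, c\<close>, and \<open>x b a = - \<beta> - x a b\<close> makes it invariant under swapping two
  adjacent indices. So every \<open>R a b c\<close> equals a generator of the ideal, and \<open>\<sigma>\<close> maps
  the generator \<open>R i j k\<close> to \<open>R (\<sigma> i) (\<sigma> j) (\<sigma> k)\<close>.\<close>

lemma poly_mapping_sum_single:
  "(p::'a \<Rightarrow>\<^sub>0 'b::comm_monoid_add) = (\<Sum>m\<in>Poly_Mapping.keys p. Poly_Mapping.single m (Poly_Mapping.lookup p m))"
proof (rule poly_mapping_eqI)
  fix k
  show "Poly_Mapping.lookup p k
    = Poly_Mapping.lookup (\<Sum>m\<in>Poly_Mapping.keys p. Poly_Mapping.single m (Poly_Mapping.lookup p m)) k"
    by (cases "k \<in> Poly_Mapping.keys p")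
      (auto simp: lookup_sum lookup_single when_def in_keys_iff intro!: sum.neutral)
qed

lemma poly_mapping_induct [case_names zero single add]:
  assumes "P 0" "\<And>m c. P (Poly_Mapping.single m c)" "\<And>p q. P p \<Longrightarrow> P q \<Longrightarrow> P (p + q)"
  shows "P (p::'a \<Rightarrow>\<^sub>0 'b::comm_monoid_add)"
proof -
  have "P (\<Sum>m\<in>A. Poly_Mapping.single m (Poly_Mapping.lookup p m))" if "finite A" for A
    using that by (induction A rule: finite_induct) (auto intro: assms)
  then show ?thesis
    using poly_mapping_sum_single[of p] by (metis finite_keys)
qed

lemma Const_add: "Const (a + b) = Const a + Const b"
  by (simp add: Const_def single_add)

lemma Const_mult: "Const (a * b) = Const a * Const b"
  by (simp add: Const_def mult_single)

lemma Const_0 [simp]: "Const 0 = 0"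
  by (simp add: Const_def)

lemma Const_1 [simp]: "Const 1 = 1"
  by (simp add: Const_def)

lemma Var_power: "Var v ^ k = Poly_Mapping.single (Poly_Mapping.single v k) 1"
proof (induction k)
  case (Suc k)
  have "Poly_Mapping.single v (Suc k) = Poly_Mapping.single v 1 + Poly_Mapping.single v k"
    by (simp add: single_add[symmetric])
  with Suc show ?case
    by (simp add: Var_def mult_single)
qed simp

lemma vars_add: "vars (p + q) \<subseteq> vars p \<union> vars q"
  unfolding vars_def using keys_add[of p q] by blast

lemma vars_uminus [simp]: "vars (- p) = vars p"
  unfolding vars_def by simp

lemma vars_diff: "vars (p - q) \<subseteq> vars p \<union> vars q"
  using vars_add[of p "- q"] by simp

lemma vars_mult: "vars (p * q) \<subseteq> vars p \<union> vars q"
proof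
  fix x
  assume "x \<in> vars (p * q)"
  then obtain m where m: "m \<in> Poly_Mapping.keys (p * q)" "x \<in> Poly_Mapping.keys m"
    unfolding vars_def by blast
  then obtain a b where "m = a + b" "a \<in> Poly_Mapping.keys p" "b \<in> Poly_Mapping.keys q"
    using keys_mult[of p q] by blast
  with m(2) show "x \<in> vars p \<union> vars q"
    using keys_add[of a b] unfolding vars_def by blast
qed

lemma vars_Const [simp]: "vars (Const c) = {}"
  unfolding vars_def Const_def by simp

lemma vars_0 [simp]: "vars 0 = {}"
  unfolding vars_def by simp

lemma vars_1 [simp]: "vars 1 = {}"
  unfolding vars_def by simp

lemma vars_Var [simp]: "vars (Var v) = {v}"
  unfolding vars_def Var_def by simp

lemma vars_add_subset: "vars p \<subseteq> A \<Longrightarrow> vars q \<subseteq> A \<Longrightarrow> vars (p + q) \<subseteq> A"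
  using vars_add by blast

lemma vars_mult_subset: "vars p \<subseteq> A \<Longrightarrow> vars q \<subseteq> A \<Longrightarrow> vars (p * q) \<subseteq> A"
  using vars_mult by blast

lemma vars_power_subset: "vars p \<subseteq> A \<Longrightarrow> vars (p ^ k) \<subseteq> A"
  by (induction k) (simp_all add: vars_mult_subset)

lemma vars_sum_subset: "(\<And>x. x \<in> B \<Longrightarrow> vars (g x) \<subseteq> A) \<Longrightarrow> vars (sum g B) \<subseteq> A"
  by (induction B rule: infinite_finite_induct) (simp_all add: vars_add_subset)

lemma vars_prod_subset: "(\<And>x. x \<in> B \<Longrightarrow> vars (g x) \<subseteq> A) \<Longrightarrow> vars (prod g B) \<subseteq> A"
  by (induction B rule: infinite_finite_induct) (simp_all add: vars_mult_subset)

lemma keys_monomial_subset_vars: "m \<in> Poly_Mapping.keys p \<Longrightarrow> Poly_Mapping.keys m \<subseteq> vars p"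
  unfolding vars_def by blast

section \<open>Substitution\<close>

definition monom_subst :: "((nat \<times> nat) \<Rightarrow> 'k::comm_ring_1 pX) \<Rightarrow> ((nat \<times> nat) \<Rightarrow>\<^sub>0 nat) \<Rightarrow> 'k pX" where
  "monom_subst s m = (\<Prod>v\<in>Poly_Mapping.keys m. s v ^ Poly_Mapping.lookup m v)"

definition poly_subst :: "((nat \<times> nat) \<Rightarrow> 'k::comm_ring_1 pX) \<Rightarrow> 'k pX \<Rightarrow> 'k pX" where
  "poly_subst s p = (\<Sum>m\<in>Poly_Mapping.keys p. Const (Poly_Mapping.lookup p m) * monom_subst s m)"

lemma monom_subst_superset:
  assumes "finite A" "Poly_Mapping.keys m \<subseteq> A"
  shows "monom_subst s m = (\<Prod>v\<in>A. s v ^ Poly_Mapping.lookup m v)"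
  unfolding monom_subst_def
  by (rule prod.mono_neutral_left) (use assms in \<open>auto simp: in_keys_iff\<close>)

lemma monom_subst_add: "monom_subst s (m1 + m2) = monom_subst s m1 * monom_subst s m2"
proof -
  let ?A = "Poly_Mapping.keys m1 \<union> Poly_Mapping.keys m2"
  have "monom_subst s (m1 + m2) = (\<Prod>v\<in>?A. s v ^ Poly_Mapping.lookup (m1 + m2) v)"
    by (rule monom_subst_superset) (auto dest: keys_add[THEN subsetD])
  also have "\<dots> = (\<Prod>v\<in>?A. s v ^ Poly_Mapping.lookup m1 v) * (\<Prod>v\<in>?A. s v ^ Poly_Mapping.lookup m2 v)"
    by (simp add: lookup_add power_add prod.distrib)
  also have "\<dots> = monom_subst s m1 * monom_subst s m2"
    by (simp add: monom_subst_superset[symmetric])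
  finally show ?thesis .
qed

lemma monom_subst_0 [simp]: "monom_subst s 0 = 1"
  by (simp add: monom_subst_def)

lemma monom_subst_Var: "monom_subst Var m = Poly_Mapping.single m 1"
proof -
  have prod_single: "(\<Prod>v\<in>A. Poly_Mapping.single (g v) (1::'k::comm_ring_1))
    = Poly_Mapping.single (\<Sum>v\<in>A. g v) 1"
    if "finite A" for A and g :: "nat \<times> nat \<Rightarrow> (nat \<times> nat) \<Rightarrow>\<^sub>0 nat"
    using that by (induction A rule: finite_induct) (simp_all add: mult_single)
  show ?thesis
    unfolding monom_subst_def Var_power
    by (subst prod_single) (simp_all flip: poly_mapping_sum_single)
qed

lemma poly_subst_single: "poly_subst s (Poly_Mapping.single m c) = Const c * monom_subst s m"
  by (simp add: poly_subst_def)

lemma poly_subst_0 [simp]: "poly_subst s 0 = 0"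
  by (simp add: poly_subst_def)

lemma poly_subst_add: "poly_subst s (p + q) = poly_subst s p + poly_subst s q"
  unfolding poly_subst_def
  by (rule setsum_keys_plus_distrib) (simp_all add: Const_add distrib_right)

lemma poly_subst_uminus: "poly_subst s (- p) = - poly_subst s p"
  using poly_subst_add[of s p "- p"] by (simp add: minus_unique)

lemma poly_subst_diff: "poly_subst s (p - q) = poly_subst s p - poly_subst s q"
  using poly_subst_add[of s p "- q"] by (simp add: poly_subst_uminus)

lemma poly_subst_mult: "poly_subst s (p * q) = poly_subst s p * poly_subst s q"
proof (induction p rule: poly_mapping_induct)
  case (single m a)
  show ?case
  proof (induction q rule: poly_mapping_induct)
    case (single l b)
    show ?case
      by (simp add: mult_single poly_subst_single monom_subst_add Const_mult mult_ac)
  next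
    case (add q1 q2)
    then show ?case
      by (simp add: distrib_left poly_subst_add)
  qed simp
next
  case (add p1 p2)
  then show ?case
    by (simp add: distrib_right poly_subst_add)
qed simp

lemma poly_subst_Const [simp]: "poly_subst s (Const c) = Const c"
  using poly_subst_single[of s 0 c] by (simp add: Const_def)

lemma poly_subst_1 [simp]: "poly_subst s 1 = 1"
  using poly_subst_Const[of s 1] by simp

lemma poly_subst_Var [simp]: "poly_subst s (Var v) = s v"
  by (simp add: Var_def poly_subst_single monom_subst_def)

lemma poly_subst_Var_id: "poly_subst Var p = p"
proof (induction p rule: poly_mapping_induct)
  case (single m c)
  then show ?case
    by (simp add: poly_subst_single monom_subst_Var Const_def mult_single)
next
  case (add p q)
  then show ?case
    by (simp add: poly_subst_add)
qed simp

lemma vars_poly_subst: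
  assumes "\<And>v. v \<in> vars p \<Longrightarrow> vars (s v) \<subseteq> A"
  shows "vars (poly_subst s p) \<subseteq> A"
  unfolding poly_subst_def monom_subst_def
  using assms keys_monomial_subset_vars[of _ p]
  by (intro vars_sum_subset vars_mult_subset vars_prod_subset vars_power_subset) auto

lemma poly_subst_cong:
  assumes "\<And>v. v \<in> vars p \<Longrightarrow> s v = t v"
  shows "poly_subst s p = poly_subst t p"
  unfolding poly_subst_def monom_subst_def
  by (intro sum.cong prod.cong refl arg_cong2[where f="(*)"] arg_cong2[where f="(^)"])
    (use assms keys_monomial_subset_vars[of _ p] in blast)

text \<open>The homomorphism laws are only assumed on polynomials in the variables \<open>A\<close>, so that the
  lemma applies to automorphisms of \<^const>\<open>Xring\<close>; this suffices because such polynomials are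
  closed under the operations that build \<open>p\<close> from its monomials.\<close>

lemma hom_eq_poly_subst:
  fixes f :: "'k::comm_ring_1 pX \<Rightarrow> 'k pX"
  assumes one: "f 1 = 1"
    and add: "\<And>p q. vars p \<subseteq> A \<Longrightarrow> vars q \<subseteq> A \<Longrightarrow> f (p + q) = f p + f q"
    and mult: "\<And>p q. vars p \<subseteq> A \<Longrightarrow> vars q \<subseteq> A \<Longrightarrow> f (p * q) = f p * f q"
    and scalar: "\<And>c p. vars p \<subseteq> A \<Longrightarrow> f (Const c * p) = Const c * f p"
    and p: "vars p \<subseteq> A"
  shows "f p = poly_subst (\<lambda>v. f (Var v)) p"
proof -
  have f_sum: "f (sum g B) = (\<Sum>x\<in>B. f (g x))" if "\<And>x. x \<in> B \<Longrightarrow> vars (g x) \<subseteq> A" for g B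
    using that
  proof (induction B rule: infinite_finite_induct)
    case (insert x F)
    then show ?case
      by (simp add: add vars_sum_subset)
  qed (use add[of 0 0] in auto)
  have f_prod: "f (prod g B) = (\<Prod>x\<in>B. f (g x))" if "\<And>x. x \<in> B \<Longrightarrow> vars (g x) \<subseteq> A" for g B
    using that
  proof (induction B rule: infinite_finite_induct)
    case (insert x F)
    then show ?case
      by (simp add: mult vars_prod_subset)
  qed (auto simp: one)
  have f_power: "f (q ^ k) = f q ^ k" if "vars q \<subseteq> A" for q k
    using that by (induction k) (simp_all add: one mult vars_power_subset)
  have f_monom: "f (monom_subst Var m) = monom_subst (\<lambda>v. f (Var v)) m"
    if m: "Poly_Mapping.keys m \<subseteq> A" for m
  proof -
    have "f (monom_subst Var m) = (\<Prod>v\<in>Poly_Mapping.keys m. f (Var v ^ Poly_Mapping.lookup m v))"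
      unfolding monom_subst_def using m by (intro f_prod vars_power_subset) auto
    also have "\<dots> = monom_subst (\<lambda>v. f (Var v)) m"
      unfolding monom_subst_def using m by (intro prod.cong refl f_power) auto
    finally show ?thesis .
  qed
  have vars_monom: "vars (monom_subst Var m) \<subseteq> A"
    if "Poly_Mapping.keys m \<subseteq> A" for m
    unfolding monom_subst_def using that
    by (intro vars_prod_subset vars_power_subset) auto
  have keys_A: "Poly_Mapping.keys m \<subseteq> A" if "m \<in> Poly_Mapping.keys p" for m
    using keys_monomial_subset_vars[OF that] p by blast
  have "f p = f (poly_subst Var p)"
    by (simp add: poly_subst_Var_id)
  also have "\<dots> = (\<Sum>m\<in>Poly_Mapping.keys p. f (Const (Poly_Mapping.lookup p m) * monom_subst Var m))"
    unfolding poly_subst_def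
    by (rule f_sum) (simp add: vars_mult_subset vars_monom keys_A)
  also have "\<dots> = poly_subst (\<lambda>v. f (Var v)) p"
    unfolding poly_subst_def
  proof (rule sum.cong[OF refl])
    fix m
    assume "m \<in> Poly_Mapping.keys p"
    then show "f (Const (Poly_Mapping.lookup p m) * monom_subst Var m)
      = Const (Poly_Mapping.lookup p m) * monom_subst (\<lambda>v. f (Var v)) m"
      using scalar[OF vars_monom] f_monom keys_A by simp
  qed
  finally show ?thesis .
qed

lemma poly_subst_poly_subst: "poly_subst s (poly_subst t p) = poly_subst (\<lambda>v. poly_subst s (t v)) p"
proof -
  have "poly_subst s (poly_subst t p) = poly_subst (\<lambda>v. poly_subst s (poly_subst t (Var v))) p"
    by (rule hom_eq_poly_subst[where A=UNIV and f="\<lambda>q. poly_subst s (poly_subst t q)"])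
      (simp_all add: poly_subst_add poly_subst_mult)
  then show ?thesis
    by simp
qed

section \<open>The action of the symmetric group\<close>

definition perm_act :: "'k::comm_ring_1 \<Rightarrow> (nat \<Rightarrow> nat) \<Rightarrow> 'k pX \<Rightarrow> 'k pX" where
  "perm_act \<beta> \<sigma> = poly_subst (\<lambda>v. xx \<beta> (\<sigma> (fst v)) (\<sigma> (snd v)))"

lemma perm_act_Var [simp]: "perm_act \<beta> \<sigma> (Var v) = xx \<beta> (\<sigma> (fst v)) (\<sigma> (snd v))"
  by (simp add: perm_act_def)

lemma perm_act_add: "perm_act \<beta> \<sigma> (p + q) = perm_act \<beta> \<sigma> p + perm_act \<beta> \<sigma> q"
  by (simp add: perm_act_def poly_subst_add)

lemma perm_act_diff: "perm_act \<beta> \<sigma> (p - q) = perm_act \<beta> \<sigma> p - perm_act \<beta> \<sigma> q"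
  by (simp add: perm_act_def poly_subst_diff)

lemma perm_act_uminus: "perm_act \<beta> \<sigma> (- p) = - perm_act \<beta> \<sigma> p"
  by (simp add: perm_act_def poly_subst_uminus)

lemma perm_act_mult: "perm_act \<beta> \<sigma> (p * q) = perm_act \<beta> \<sigma> p * perm_act \<beta> \<sigma> q"
  by (simp add: perm_act_def poly_subst_mult)

lemma perm_act_Const [simp]: "perm_act \<beta> \<sigma> (Const c) = Const c"
  by (simp add: perm_act_def)

lemma vars_Xring_bounds:
  assumes "p \<in> Xring n" "v \<in> vars p"
  shows "fst v \<in> {1..n}" "snd v \<in> {1..n}" "fst v < snd v"
  using assms unfolding Xring_def idx_def by auto

lemma permutes_neq: "\<sigma> permutes S \<Longrightarrow> a \<noteq> b \<Longrightarrow> \<sigma> a \<noteq> \<sigma> b"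
  by (metis permutes_inj injD)

lemma xx_swap: "a \<noteq> b \<Longrightarrow> xx \<beta> a b = - Const \<beta> - xx \<beta> b a"
  unfolding xx_def by auto

lemma vars_xx:
  assumes "a \<in> {1..n}" "b \<in> {1..n}" "a \<noteq> b"
  shows "vars (xx \<beta> a b) \<subseteq> idx n"
  using assms vars_diff[of "- Const \<beta>" "Var (b, a)"] by (auto simp: xx_def idx_def)

lemma perm_act_xx:
  assumes \<sigma>: "\<sigma> permutes {1..n}" and "a \<noteq> b"
  shows "perm_act \<beta> \<sigma> (xx \<beta> a b) = xx \<beta> (\<sigma> a) (\<sigma> b)"
proof (cases "a < b")
  case False
  then have "perm_act \<beta> \<sigma> (xx \<beta> a b) = - Const \<beta> - xx \<beta> (\<sigma> b) (\<sigma> a)"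
    by (simp add: xx_def perm_act_diff perm_act_uminus)
  also have "\<dots> = xx \<beta> (\<sigma> a) (\<sigma> b)"
    by (rule xx_swap[OF permutes_neq[OF \<sigma> \<open>a \<noteq> b\<close>], symmetric])
  finally show ?thesis .
qed (simp add: xx_def)

lemma perm_act_in_Xring:
  assumes \<sigma>: "\<sigma> permutes {1..n}" and p: "p \<in> Xring n"
  shows "perm_act \<beta> \<sigma> p \<in> Xring n"
  unfolding perm_act_def Xring_def
proof (intro CollectI vars_poly_subst)
  fix v
  assume "v \<in> vars p"
  with p have "fst v \<in> {1..n}" "snd v \<in> {1..n}" "fst v \<noteq> snd v"
    using vars_Xring_bounds less_irrefl by metis+
  then show "vars (xx \<beta> (\<sigma> (fst v)) (\<sigma> (snd v))) \<subseteq> idx n"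
    using permutes_neq[OF \<sigma>] permutes_in_image[OF \<sigma>] by (intro vars_xx) auto
qed

lemma perm_act_comp:
  assumes \<sigma>: "\<sigma> permutes {1..n}" and \<tau>: "\<tau> permutes {1..n}" and p: "p \<in> Xring n"
  shows "perm_act \<beta> (\<sigma> \<circ> \<tau>) p = perm_act \<beta> \<sigma> (perm_act \<beta> \<tau> p)"
  unfolding perm_act_def poly_subst_poly_subst
proof (rule poly_subst_cong)
  fix v
  assume "v \<in> vars p"
  with p have "\<tau> (fst v) \<noteq> \<tau> (snd v)"
    using vars_Xring_bounds(3) permutes_neq[OF \<tau>] by (metis less_irrefl)
  from perm_act_xx[OF \<sigma> this, of \<beta>]
  show "xx \<beta> ((\<sigma> \<circ> \<tau>) (fst v)) ((\<sigma> \<circ> \<tau>) (snd v))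
    = poly_subst (\<lambda>v. xx \<beta> (\<sigma> (fst v)) (\<sigma> (snd v))) (xx \<beta> (\<tau> (fst v)) (\<tau> (snd v)))"
    by (simp add: perm_act_def)
qed

lemma perm_act_id:
  assumes p: "p \<in> Xring n"
  shows "perm_act \<beta> id p = p"
proof -
  have "perm_act \<beta> id p = poly_subst Var p"
    unfolding perm_act_def
    using vars_Xring_bounds[OF p] by (intro poly_subst_cong) (simp add: xx_def)
  then show ?thesis
    by (simp add: poly_subst_Var_id)
qed

lemma perm_act_inv:
  assumes \<sigma>: "\<sigma> permutes {1..n}" and p: "p \<in> Xring n"
  shows "perm_act \<beta> (inv \<sigma>) (perm_act \<beta> \<sigma> p) = p"
  using perm_act_comp[OF permutes_inv[OF \<sigma>] \<sigma> p] perm_act_id[OF p] permutes_inv_o(2)[OF \<sigma>]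
  by simp

lemma alg_aut_perm_act:
  assumes \<sigma>: "\<sigma> permutes {1..n}"
  shows "alg_aut n (perm_act \<beta> \<sigma>)"
proof -
  have \<sigma>': "inv \<sigma> permutes {1..n}"
    using permutes_inv[OF \<sigma>] .
  have "bij_betw (perm_act \<beta> \<sigma>) (Xring n) (Xring n)"
  proof (rule bij_betw_byWitness[where f'="perm_act \<beta> (inv \<sigma>)"])
    show "\<forall>p\<in>Xring n. perm_act \<beta> (inv \<sigma>) (perm_act \<beta> \<sigma> p) = p"
      using perm_act_inv[OF \<sigma>] by blast
    show "\<forall>p\<in>Xring n. perm_act \<beta> \<sigma> (perm_act \<beta> (inv \<sigma>) p) = p"
      using perm_act_inv[OF \<sigma>'] unfolding permutes_inv_inv[OF \<sigma>] by blast
    show "perm_act \<beta> \<sigma> ` Xring n \<subseteq> Xring n" "perm_act \<beta> (inv \<sigma>) ` Xring n \<subseteq> Xring n"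
      using perm_act_in_Xring[OF \<sigma>] perm_act_in_Xring[OF \<sigma>'] by blast+
  qed
  then show ?thesis
    unfolding alg_aut_def by (simp add: perm_act_add perm_act_mult flip: Const_1)
qed

lemma is_Sn_action_perm_act: "is_Sn_action n \<beta> (perm_act \<beta>)"
  unfolding is_Sn_action_def
  by (simp add: alg_aut_perm_act perm_act_id perm_act_comp perm_act_xx)

lemma is_Sn_action_unique:
  assumes \<psi>: "is_Sn_action n \<beta> \<psi>" and \<sigma>: "\<sigma> permutes {1..n}" and p: "p \<in> Xring n"
  shows "\<psi> \<sigma> p = perm_act \<beta> \<sigma> p"
proof -
  have "alg_aut n (\<psi> \<sigma>)"
    using \<psi> \<sigma> by (simp add: is_Sn_action_def)
  then have "\<psi> \<sigma> p = poly_subst (\<lambda>v. \<psi> \<sigma> (Var v)) p"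
    using p by (intro hom_eq_poly_subst[where A="idx n"]) (auto simp: alg_aut_def Xring_def)
  also have "\<dots> = perm_act \<beta> \<sigma> p"
    unfolding perm_act_def
  proof (rule poly_subst_cong)
    fix v
    assume "v \<in> vars p"
    with p have v: "fst v \<in> {1..n}" "snd v \<in> {1..n}" "fst v < snd v"
      by (fact vars_Xring_bounds)+
    then have "Var v = xx \<beta> (fst v) (snd v)"
      by (simp add: xx_def)
    with v show "\<psi> \<sigma> (Var v) = xx \<beta> (\<sigma> (fst v)) (\<sigma> (snd v))"
      using \<psi> \<sigma> unfolding is_Sn_action_def by auto
  qed
  finally show ?thesis .
qed

section \<open>Invariance of the ideal\<close>

lemma Jideal_add: "a \<in> Jideal n \<beta> \<alpha> \<Longrightarrow> b \<in> Jideal n \<beta> \<alpha> \<Longrightarrow> a + b \<in> Jideal n \<beta> \<alpha>"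
  by (induction a rule: Jideal.induct) (auto simp: add.assoc intro: Jideal.step)

lemma Jideal_mult: "a \<in> Jideal n \<beta> \<alpha> \<Longrightarrow> r \<in> Xring n \<Longrightarrow> r * a \<in> Jideal n \<beta> \<alpha>"
proof (induction a rule: Jideal.induct)
  case (step r' i j k q)
  have "r * r' \<in> Xring n"
    using step by (simp add: Xring_def vars_mult_subset)
  then have "(r * r') * Jgen \<beta> \<alpha> i j k + r * q \<in> Jideal n \<beta> \<alpha>"
    using step by (intro Jideal.step) auto
  then show ?case
    by (simp add: algebra_simps)
qed (simp add: Jideal.zero)

lemma Jgen_in_Jideal:
  "1 \<le> i \<Longrightarrow> i < j \<Longrightarrow> j < k \<Longrightarrow> k \<le> n \<Longrightarrow> Jgen \<beta> \<alpha> i j k \<in> Jideal n \<beta> \<alpha>"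
  using Jideal.step[of 1 n i j k 0 \<beta> \<alpha>] by (simp add: Xring_def Jideal.zero)

definition Jrel :: "'k::comm_ring_1 \<Rightarrow> 'k \<Rightarrow> nat \<Rightarrow> nat \<Rightarrow> nat \<Rightarrow> 'k pX" where
  "Jrel \<beta> \<alpha> a b c = xx \<beta> a b * xx \<beta> b c - xx \<beta> a c * (xx \<beta> a b + xx \<beta> b c + Const \<beta>) - Const \<alpha>"

lemma Jrel_eq_Jgen: "i < j \<Longrightarrow> j < k \<Longrightarrow> Jrel \<beta> \<alpha> i j k = Jgen \<beta> \<alpha> i j k"
  by (simp add: Jrel_def Jgen_def xx_def)

lemma Jrel_swap12: "a \<noteq> b \<Longrightarrow> Jrel \<beta> \<alpha> b a c = Jrel \<beta> \<alpha> a b c"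
  unfolding Jrel_def by (simp add: xx_swap[of b a] algebra_simps)

lemma Jrel_swap23: "b \<noteq> c \<Longrightarrow> Jrel \<beta> \<alpha> a c b = Jrel \<beta> \<alpha> a b c"
  unfolding Jrel_def by (simp add: xx_swap[of c b] algebra_simps)

lemma Jrel_in_Jideal:
  assumes "a \<in> {1..n}" "b \<in> {1..n}" "c \<in> {1..n}" "a \<noteq> b" "b \<noteq> c" "a \<noteq> c"
  shows "Jrel \<beta> \<alpha> a b c \<in> Jideal n \<beta> \<alpha>"
proof -
  have sorted: "Jrel \<beta> \<alpha> x y z \<in> Jideal n \<beta> \<alpha>" if "1 \<le> x" "x < y" "y < z" "z \<le> n" for x y z
    using that by (simp add: Jrel_eq_Jgen Jgen_in_Jideal)
  have last_sorted: "Jrel \<beta> \<alpha> x y z \<in> Jideal n \<beta> \<alpha>"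
    if xyz: "x \<in> {1..n}" "y \<in> {1..n}" "z \<in> {1..n}" "x \<noteq> y" "x \<noteq> z" "y < z" for x y z
  proof -
    consider "x < y" | "y < x" "x < z" | "z < x"
      using xyz by linarith
    then show ?thesis
    proof cases
      case 2
      then show ?thesis
        using xyz sorted[of y x z] by (simp add: Jrel_swap12)
    next
      case 3
      then have "Jrel \<beta> \<alpha> x y z = Jrel \<beta> \<alpha> y z x"
        using xyz by (simp add: Jrel_swap12[of x y \<beta> \<alpha> z, symmetric] Jrel_swap23[of x z \<beta> \<alpha> y, symmetric])
      then show ?thesis
        using 3 xyz sorted[of y z x] by simp
    qed (use xyz sorted in auto)
  qed
  show ?thesis
  proof (cases "b < c")
    case False
    then show ?thesis
      using assms last_sorted[of a c b] by (simp add: Jrel_swap23)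
  qed (use assms last_sorted in auto)
qed

lemma perm_act_Jideal:
  assumes \<sigma>: "\<sigma> permutes {1..n}" and "p \<in> Jideal n \<beta> \<alpha>"
  shows "perm_act \<beta> \<sigma> p \<in> Jideal n \<beta> \<alpha>"
  using \<open>p \<in> Jideal n \<beta> \<alpha>\<close>
proof (induction p rule: Jideal.induct)
  case zero
  then show ?case
    using perm_act_Const[of \<beta> \<sigma> 0] by (simp add: Jideal.zero)
next
  case (step r i j k q)
  have "perm_act \<beta> \<sigma> (Jgen \<beta> \<alpha> i j k) = Jrel \<beta> \<alpha> (\<sigma> i) (\<sigma> j) (\<sigma> k)"
    by (simp add: Jgen_def Jrel_def perm_act_diff perm_act_add perm_act_mult)
  also have "\<dots> \<in> Jideal n \<beta> \<alpha>"
    using step permutes_neq[OF \<sigma>] permutes_in_image[OF \<sigma>] by (intro Jrel_in_Jideal) auto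
  finally have "perm_act \<beta> \<sigma> (Jgen \<beta> \<alpha> i j k) \<in> Jideal n \<beta> \<alpha>" .
  moreover have "perm_act \<beta> \<sigma> r \<in> Xring n"
    using perm_act_in_Xring[OF \<sigma> \<open>r \<in> Xring n\<close>] .
  ultimately show ?case
    using step.IH by (simp add: perm_act_add perm_act_mult Jideal_add Jideal_mult)
qed

theorem proposition3p21:
  fixes n :: nat and \<beta> \<alpha> :: "'k::comm_ring_1"
  assumes "n \<ge> 1"
  shows "\<exists>\<phi>. is_Sn_action n \<beta> \<phi>
     \<and> (\<forall>\<psi>. is_Sn_action n \<beta> \<psi> \<longrightarrow>
          (\<forall>\<sigma>. \<sigma> permutes {1..n} \<longrightarrow> (\<forall>p\<in>Xring n. \<psi> \<sigma> p = \<phi> \<sigma> p)))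
     \<and> (\<forall>\<sigma>. \<sigma> permutes {1..n} \<longrightarrow> \<phi> \<sigma> ` Jideal n \<beta> \<alpha> \<subseteq> Jideal n \<beta> \<alpha>)
     \<and> (\<forall>\<sigma>. \<sigma> permutes {1..n} \<longrightarrow>
          (\<forall>p\<in>Xring n. \<forall>q\<in>Xring n. p - q \<in> Jideal n \<beta> \<alpha> \<longrightarrow> \<phi> \<sigma> p - \<phi> \<sigma> q \<in> Jideal n \<beta> \<alpha>))"
proof (intro exI conjI allI impI ballI)
  show "is_Sn_action n \<beta> (perm_act \<beta>)"
    by (rule is_Sn_action_perm_act)
  fix \<sigma> :: "nat \<Rightarrow> nat"
  assume \<sigma>: "\<sigma> permutes {1..n}"
  show "perm_act \<beta> \<sigma> ` Jideal n \<beta> \<alpha> \<subseteq> Jideal n \<beta> \<alpha>"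
    using perm_act_Jideal[OF \<sigma>] by blast
  show "perm_act \<beta> \<sigma> p - perm_act \<beta> \<sigma> q \<in> Jideal n \<beta> \<alpha>" if "p - q \<in> Jideal n \<beta> \<alpha>" for p q
    using perm_act_Jideal[OF \<sigma> that] by (simp add: perm_act_diff)
  show "\<psi> \<sigma> p = perm_act \<beta> \<sigma> p" if "is_Sn_action n \<beta> \<psi>" "p \<in> Xring n" for \<psi> p
    using is_Sn_action_unique[OF that(1) \<sigma> that(2)] .
qed

end
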